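(* Consider an instance of \textbf{LTSP} in which there is $k\in\mathbb N$ such that $s(f)=k$ and $n(f)=1$ for every file $f\in\mathcal F$. Then $\mathcal B_1=\emptyset$ is optimal, i.e., $v(\emptyset)\le v(\mathcal B_1)$ for every set $\mathcal B_1$ of mini-batches.
   Context: A single-track tape stores a sequence of files $\mathcal F=(f_1,\dots,f_n)$ laid out contiguously from left to right: file $f$ occupies blocks $l(f),\dots,r(f)$, has size $s(f)=r(f)-l(f)+1$, $l(f_1)=1$, $l(f_{i+1})=r(f_i)+1$, and $m=\sum_f s(f)$. The tape moves one block per time step; at time $0$ the head is at position $m$. A file is read when the head traverses it rightwards from $l(f)$ to $r(f)$. $\mathcal R$ is a finite set of requests, all released at time $0$, each associated with a file $f(r)$; $\mathcal R(f)$ is the set of requests for $f$ and $n(f)=|\mathcal R(f)|$. A request's response time is the time at which the head starts a rightward reading traversal of its file (all pending requests of a file are serviced simultaneously). \textbf{LTSP} asks to minimize the sum of response times. A mini-batch is a pair $b=(f,f')$ of files with $l(f)\le l(f')$; $l(b)=l(f)$, $r(b)=r(f')$, $s(b)=r(b)-l(b)+1$, and $\mathcal F(b)$ is the set of files $g$ with $l(b)\le l(g)$ and $r(g)\le r(b)$; it is atomic if $|\mathcal F(b)|=1$. Given a set $\mathcal B_1$ of mini-batches, the associated schedule is: Phase 1, the head moves leftwards from $m$ to position $1$, and whenever it reaches $l(b)$ for some $b\in\mathcal B_1$ it executes $b$ (moves rightwards from $l(b)$ to $r(b)$, reading every file of $\mathcal F(b)$, then returns to $l(b)$) before continuing leftwards,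 mini-batches thus being executed in decreasing order of their left endpoints; Phase 2, the head moves rightwards from position $1$ to $m$, reading every file. $v(\mathcal B_1)$ denotes the total response time of this schedule. *)

theory Defs
  imports Main
begin

text \<open>An LTSP instance with n files f_0,...,f_(n-1) (0-indexed, left to right),
  file sizes s :: nat => nat (s i >= 1) and request counts nr :: nat => nat
  (nr i = n(f_i)). All requests are released at time 0.\<close>

definition lpos :: "(nat \<Rightarrow> nat) \<Rightarrow> nat \<Rightarrow> nat" where
  "lpos s i = 1 + (\<Sum>j<i. s j)"

definition rpos :: "(nat \<Rightarrow> nat) \<Rightarrow> nat \<Rightarrow> nat" where
  "rpos s i = lpos s i + s i - 1"

definition tape_len :: "nat \<Rightarrow> (nat \<Rightarrow> nat) \<Rightarrow> nat" where
  "tape_len n s = (\<Sum>j<n. s j)"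

definition is_minibatch :: "nat \<Rightarrow> (nat \<Rightarrow> nat) \<Rightarrow> nat \<times> nat \<Rightarrow> bool" where
  "is_minibatch n s b \<longleftrightarrow> fst b < n \<and> snd b < n \<and> lpos s (fst b) \<le> lpos s (snd b)"

definition mb_l :: "(nat \<Rightarrow> nat) \<Rightarrow> nat \<times> nat \<Rightarrow> nat" where
  "mb_l s b = lpos s (fst b)"

definition mb_r :: "(nat \<Rightarrow> nat) \<Rightarrow> nat \<times> nat \<Rightarrow> nat" where
  "mb_r s b = rpos s (snd b)"

definition mb_size :: "(nat \<Rightarrow> nat) \<Rightarrow> nat \<times> nat \<Rightarrow> nat" where
  "mb_size s b = mb_r s b - mb_l s b + 1"

definition mb_files :: "nat \<Rightarrow> (nat \<Rightarrow> nat) \<Rightarrow> nat \<times> nat \<Rightarrow> nat set" where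
  "mb_files n s b = {g. g < n \<and> mb_l s b \<le> lpos s g \<and> rpos s g \<le> mb_r s b}"

text \<open>The set B_1 is given as the list bs of its mini-batches in execution order
  (non-increasing left endpoints). Executing b costs 2 s(b) time units
  (s(b) steps rightwards reading blocks l(b)..r(b), s(b) steps back to l(b)).\<close>
definition detour :: "(nat \<Rightarrow> nat) \<Rightarrow> (nat \<times> nat) list \<Rightarrow> nat \<Rightarrow> nat" where
  "detour s bs q = (\<Sum>p<q. 2 * mb_size s (bs ! p))"

definition exec_time :: "nat \<Rightarrow> (nat \<Rightarrow> nat) \<Rightarrow> (nat \<times> nat) list \<Rightarrow> nat \<Rightarrow> nat" where
  "exec_time n s bs q = (tape_len n s - mb_l s (bs ! q)) + detour s bs q"

text \<open>Phase 2 starts at position 1 at this time.\<close>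
definition phase2_time :: "nat \<Rightarrow> (nat \<Rightarrow> nat) \<Rightarrow> (nat \<times> nat) list \<Rightarrow> nat" where
  "phase2_time n s bs = (tape_len n s - 1) + detour s bs (length bs)"

text \<open>Response time of (requests of) file g: first start of a rightwards reading
  traversal of g.\<close>
definition resp_time :: "nat \<Rightarrow> (nat \<Rightarrow> nat) \<Rightarrow> (nat \<times> nat) list \<Rightarrow> nat \<Rightarrow> nat" where
  "resp_time n s bs g = Min ({exec_time n s bs q + (lpos s g - mb_l s (bs ! q)) | q.
        q < length bs \<and> g \<in> mb_files n s (bs ! q)}
      \<union> {phase2_time n s bs + (lpos s g - 1)})"

definition total_resp :: "nat \<Rightarrow> (nat \<Rightarrow> nat) \<Rightarrow> (nat \<Rightarrow> nat) \<Rightarrow> (nat \<times> nat) list \<Rightarrow> nat" where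
  "total_resp n s nr bs = (\<Sum>g<n. nr g * resp_time n s bs g)"

definition valid_schedule :: "nat \<Rightarrow> (nat \<Rightarrow> nat) \<Rightarrow> (nat \<times> nat) list \<Rightarrow> bool" where
  "valid_schedule n s bs \<longleftrightarrow> distinct bs \<and> (\<forall>b\<in>set bs. is_minibatch n s b)
     \<and> sorted_wrt (\<lambda>a b. mb_l s b \<le> mb_l s a) bs"

end

theory Submission
  imports Defs
begin

text \<open>Build the schedule by appending its mini-batches one at a time, each new one
  being the leftmost. Appending b = (f_a, f_c) delays the a files to the left of b,
  which no mini-batch reads, by exactly 2 s(b) each; it can only speed up the files of
  b, each by at most 2 (l(b) - 1), the distance saved compared with reading it in
  Phase 2. With files of equal size k and one request each, both changes equal
  2 a (c - a + 1) k, so no mini-batch ever lowers the total response time.\<close>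

lemma lpos_le_tape_len:
  assumes pos: "\<And>i. i < n \<Longrightarrow> s i \<ge> 1" and "g < n"
  shows "lpos s g \<le> tape_len n s"
proof -
  have "lpos s g \<le> (\<Sum>j<Suc g. s j)" using pos \<open>g < n\<close> by (simp add: lpos_def)
  also have "\<dots> \<le> (\<Sum>j<n. s j)" using \<open>g < n\<close> by (intro sum_mono2) auto
  finally show ?thesis by (simp add: tape_len_def)
qed

lemma valid_schedule_appendD:
  assumes "valid_schedule n s (cs @ [b])"
  shows "valid_schedule n s cs" and "is_minibatch n s b"
    and "\<And>x. x \<in> set cs \<Longrightarrow> mb_l s b \<le> mb_l s x"
  using assms unfolding valid_schedule_def sorted_wrt_append by simp_all

lemma detour_append:
  assumes "q \<le> length cs"
  shows "detour s (cs @ [b]) q = detour s cs q"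
  unfolding detour_def using assms by (intro sum.cong) (auto simp: nth_append)

lemma exec_time_append:
  assumes "q < length cs"
  shows "exec_time n s (cs @ [b]) q = exec_time n s cs q"
  using assms detour_append[of q cs s b] by (simp add: exec_time_def nth_append)

lemma exec_time_append_last:
  "exec_time n s (cs @ [b]) (length cs) = (tape_len n s - mb_l s b) + detour s cs (length cs)"
  using detour_append[of "length cs" cs s b] by (simp add: exec_time_def)

lemma phase2_time_append:
  "phase2_time n s (cs @ [b]) = phase2_time n s cs + 2 * mb_size s b"
  using detour_append[of "length cs" cs s b] by (simp add: phase2_time_def detour_def)

lemma resp_time_le_phase2:
  "resp_time n s bs g \<le> phase2_time n s bs + (lpos s g - 1)"
  unfolding resp_time_def by (rule Min_le) auto

lemma resp_time_le_exec:
  assumes "q < length bs" "g \<in> mb_files n s (bs ! q)"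
  shows "resp_time n s bs g \<le> exec_time n s bs q + (lpos s g - mb_l s (bs ! q))"
  unfolding resp_time_def by (rule Min_le) (use assms in auto)

lemma resp_time_cases:
  obtains "resp_time n s bs g = phase2_time n s bs + (lpos s g - 1)"
  | q where "q < length bs" "g \<in> mb_files n s (bs ! q)"
      "resp_time n s bs g = exec_time n s bs q + (lpos s g - mb_l s (bs ! q))"
proof -
  have "resp_time n s bs g \<in> {exec_time n s bs q + (lpos s g - mb_l s (bs ! q)) | q.
        q < length bs \<and> g \<in> mb_files n s (bs ! q)} \<union> {phase2_time n s bs + (lpos s g - 1)}"
    unfolding resp_time_def by (rule Min_in) auto
  then show ?thesis using that by blast
qed

lemma resp_time_eq_phase2:
  assumes "\<And>q. q < length bs \<Longrightarrow> g \<notin> mb_files n s (bs ! q)"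
  shows "resp_time n s bs g = phase2_time n s bs + (lpos s g - 1)"
  by (rule resp_time_cases[of n s bs g]) (use assms in auto)

lemma resp_time_append_left:
  assumes valid: "valid_schedule n s (cs @ [b])" and left: "lpos s g < mb_l s b"
  shows "resp_time n s (cs @ [b]) g = resp_time n s cs g + 2 * mb_size s b"
proof -
  have uncovered: "g \<notin> mb_files n s x" if "x \<in> set (cs @ [b])" for x
  proof -
    have "x \<in> set cs \<or> x = b" using that by auto
    then have "mb_l s b \<le> mb_l s x" using valid_schedule_appendD(3)[OF valid] by blast
    then show ?thesis using left by (auto simp: mb_files_def)
  qed
  have "resp_time n s bs g = phase2_time n s bs + (lpos s g - 1)"
    if "set bs \<subseteq> set (cs @ [b])" for bs
    using uncovered that nth_mem by (blast intro: resp_time_eq_phase2)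
  then have "resp_time n s cs g = phase2_time n s cs + (lpos s g - 1)"
    and "resp_time n s (cs @ [b]) g = phase2_time n s (cs @ [b]) + (lpos s g - 1)"
    by auto
  then show ?thesis by (simp add: phase2_time_append)
qed

lemma resp_time_le_append:
  assumes pos: "\<And>i. i < n \<Longrightarrow> s i \<ge> 1"
  shows "resp_time n s cs g
    \<le> resp_time n s (cs @ [b]) g + (if g \<in> mb_files n s b then 2 * (mb_l s b - 1) else 0)"
proof (cases rule: resp_time_cases[of n s "cs @ [b]" g])
  case 1
  then show ?thesis using resp_time_le_phase2[of n s cs g] by (simp add: phase2_time_append)
next
  case (2 q)
  show ?thesis
  proof (cases "q < length cs")
    case True
    then show ?thesis using 2 resp_time_le_exec[of q cs g n s]
      by (simp add: exec_time_append nth_append)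
  next
    case False
    with 2 have q: "q = length cs" by simp
    with 2 have g: "g \<in> mb_files n s b" by simp
    then have "mb_l s b \<le> lpos s g" "lpos s g \<le> tape_len n s"
      using lpos_le_tape_len[OF pos] by (auto simp: mb_files_def)
    moreover have "1 \<le> mb_l s b" by (simp add: mb_l_def lpos_def)
    ultimately show ?thesis
      using 2 q g resp_time_le_phase2[of n s cs g] exec_time_append_last[of n s cs b]
      by (simp add: phase2_time_def)
  qed
qed

lemma sum_resp_time_append:
  assumes pos: "\<And>i. i < n \<Longrightarrow> s i \<ge> 1" and valid: "valid_schedule n s (cs @ [b])"
  shows "(\<Sum>g<n. resp_time n s cs g) + card {g. g < n \<and> lpos s g < mb_l s b} * (2 * mb_size s b)
    \<le> (\<Sum>g<n. resp_time n s (cs @ [b]) g) + card (mb_files n s b) * (2 * (mb_l s b - 1))"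
proof -
  have per_file: "resp_time n s cs g + (if lpos s g < mb_l s b then 2 * mb_size s b else 0)
      \<le> resp_time n s (cs @ [b]) g + (if g \<in> mb_files n s b then 2 * (mb_l s b - 1) else 0)"
    for g
  proof (cases "lpos s g < mb_l s b")
    case True
    then show ?thesis using resp_time_append_left[OF valid] by simp
  next
    case False
    then show ?thesis using resp_time_le_append[OF pos, where cs = cs and g = g and b = b] by simp
  qed
  have "{g \<in> {..<n}. g \<in> mb_files n s b} = mb_files n s b"
    by (auto simp: mb_files_def)
  then have "(\<Sum>g<n. if g \<in> mb_files n s b then 2 * (mb_l s b - 1) else 0)
      = card (mb_files n s b) * (2 * (mb_l s b - 1))"
    by (simp add: sum.inter_filter[symmetric])
  moreover have "(\<Sum>g<n. if lpos s g < mb_l s b then 2 * mb_size s b else 0)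
      = card {g. g < n \<and> lpos s g < mb_l s b} * (2 * mb_size s b)"
    by (simp add: sum.inter_filter[symmetric] conj_commute)
  moreover have "(\<Sum>g<n. resp_time n s cs g + (if lpos s g < mb_l s b then 2 * mb_size s b else 0))
      \<le> (\<Sum>g<n. resp_time n s (cs @ [b]) g + (if g \<in> mb_files n s b then 2 * (mb_l s b - 1) else 0))"
    using per_file by (intro sum_mono)
  ultimately show ?thesis by (simp add: sum.distrib)
qed

context
  fixes n k :: nat and s :: "nat \<Rightarrow> nat"
  assumes size_k: "\<And>i. i < n \<Longrightarrow> s i = k" and k_pos: "k \<ge> 1"
begin

lemma lpos_uniform: "i \<le> n \<Longrightarrow> lpos s i = 1 + i * k"
  using size_k by (simp add: lpos_def)

lemma rpos_uniform: "i < n \<Longrightarrow> rpos s i = i * k + k"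
  using lpos_uniform[of i] size_k[of i] by (simp add: rpos_def)

lemma is_minibatch_uniform: "is_minibatch n s (a, c) \<longleftrightarrow> a < n \<and> c < n \<and> a \<le> c"
  using lpos_uniform[of a] lpos_uniform[of c] k_pos by (auto simp: is_minibatch_def)

lemma mb_files_uniform:
  assumes "a \<le> c" "c < n"
  shows "mb_files n s (a, c) = {a..c}"
proof (intro set_eqI)
  fix g
  show "g \<in> mb_files n s (a, c) \<longleftrightarrow> g \<in> {a..c}"
  proof (cases "g < n")
    case True
    have "a * k \<le> g * k \<longleftrightarrow> a \<le> g" "g * k + k \<le> c * k + k \<longleftrightarrow> g \<le> c"
      using k_pos by simp_all
    moreover have "mb_l s (a, c) = 1 + a * k" "mb_r s (a, c) = c * k + k"
      using assms lpos_uniform[of a] rpos_uniform[of c] by (simp_all add: mb_l_def mb_r_def)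
    ultimately show ?thesis using True lpos_uniform[of g] rpos_uniform[of g]
      by (simp add: mb_files_def)
  next
    case False
    then show ?thesis using assms by (simp add: mb_files_def)
  qed
qed

lemma mb_size_uniform:
  assumes "a \<le> c" "c < n"
  shows "mb_size s (a, c) = (c - a + 1) * k"
proof -
  have le: "a * k \<le> c * k" using assms(1) by simp
  have "mb_l s (a, c) = 1 + a * k" "mb_r s (a, c) = c * k + k"
    using assms lpos_uniform[of a] rpos_uniform[of c] by (simp_all add: mb_l_def mb_r_def)
  with le k_pos have "mb_size s (a, c) = c * k + k - a * k"
    unfolding mb_size_def by linarith
  also have "\<dots> = (c - a + 1) * k"
    using le by (simp add: diff_mult_distrib)
  finally show ?thesis .
qed

lemma files_left_of_uniform:
  assumes "a \<le> n"
  shows "{g. g < n \<and> lpos s g < lpos s a} = {..<a}"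
  using assms lpos_uniform k_pos by auto

lemma sum_resp_time_le_append_uniform:
  assumes "valid_schedule n s (cs @ [b])"
  shows "(\<Sum>g<n. resp_time n s cs g) \<le> (\<Sum>g<n. resp_time n s (cs @ [b]) g)"
proof -
  obtain a c where b: "b = (a, c)" by fastforce
  then have ac: "a < n" "c < n" "a \<le> c"
    using valid_schedule_appendD(2)[OF assms] is_minibatch_uniform by auto
  have "card {g. g < n \<and> lpos s g < mb_l s b} = a"
    using ac files_left_of_uniform[of a] by (simp add: b mb_l_def)
  moreover have "card (mb_files n s b) = c - a + 1"
    using ac mb_files_uniform[of a c] by (simp add: b)
  moreover have "mb_size s b = (c - a + 1) * k" "mb_l s b - 1 = a * k"
    using ac mb_size_uniform[of a c] lpos_uniform[of a] by (simp_all add: b mb_l_def)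
  ultimately have "card {g. g < n \<and> lpos s g < mb_l s b} * (2 * mb_size s b)
      = card (mb_files n s b) * (2 * (mb_l s b - 1))"
    by (simp only: mult.commute mult.left_commute)
  then show ?thesis
    using sum_resp_time_append[OF _ assms] size_k k_pos by simp
qed

lemma sum_resp_time_Nil_le_uniform:
  "valid_schedule n s bs \<Longrightarrow> (\<Sum>g<n. resp_time n s [] g) \<le> (\<Sum>g<n. resp_time n s bs g)"
proof (induction bs rule: rev_induct)
  case Nil
  then show ?case by simp
next
  case (snoc b cs)
  then show ?case
    using valid_schedule_appendD(1) sum_resp_time_le_append_uniform le_trans by blast
qed

end

theorem theorem1:
  fixes n k :: nat and s nr :: "nat \<Rightarrow> nat" and bs :: "(nat \<times> nat) list"
  assumes pos: "\<And>i. i < n \<Longrightarrow> s i \<ge> 1"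
    and size_k: "\<And>i. i < n \<Longrightarrow> s i = k"
    and one_req: "\<And>i. i < n \<Longrightarrow> nr i = 1"
    and valid: "valid_schedule n s bs"
  shows "total_resp n s nr [] \<le> total_resp n s nr bs"
proof (cases "n = 0")
  case True
  then show ?thesis by (simp add: total_resp_def)
next
  case False
  then have "k \<ge> 1" using pos size_k by fastforce
  moreover have "total_resp n s nr xs = (\<Sum>g<n. resp_time n s xs g)" for xs
    unfolding total_resp_def using one_req by (intro sum.cong) auto
  ultimately show ?thesis
    using sum_resp_time_Nil_le_uniform[OF size_k _ valid] by simp
qed

end
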